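(* Let $n,m\ge 1$ and let $f\in L^2((0,1)^n)$ and $h\in L^2((0,1)^m)$ be real-valued, with $f$ not a.e. constant and $h$ not a.e. zero, and define $g\in L^2((0,1)^{n+m})$ by $g(x,\xi)=f(x)h(\xi)$ for $x=(x_1,\dots,x_n)\in(0,1)^n$, $\xi\in(0,1)^m$. Fix $i\in\{1,\dots,n\}$. Then $$S^g_{T_{x_i}}=\lambda_{f,h}\,S^f_{T_{x_i}},\qquad \lambda_{f,h}=\frac{\int f(x)^2\,dx-f_0^2}{\int f(x)^2\,dx-\dfrac{f_0^2h_0^2}{\int h(\xi)^2\,d\xi}}.$$ In particular $S^g_{T_{x_i}}\le S^f_{T_{x_i}}$ and $$S^g_{T_{x_i}}\ge\Big(1-\frac{f_0^2}{\int f(x)^2\,dx}\Big)S^f_{T_{x_i}}.$$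
   Context: All integrals are with respect to Lebesgue measure over the unit cubes (equivalently, the inputs are independent and uniformly distributed on $[0,1]$). For a function $\varphi$, $\varphi_0=\int\varphi$ denotes its mean. For a square-integrable function $\varphi$ of variables $(x,y)$ with $x=(x_1,\dots,x_n)$ and $y$ a further (possibly empty) block of variables, write $x_{\sim i}=(x_1,\dots,x_{i-1},x_{i+1},\dots,x_n)$; the total Sobol sensitivity index of $x_i$ for $\varphi$ is $$S^{\varphi}_{T_{x_i}}=\frac{\int\varphi^2\,dx\,dy-\int\big(\int\varphi\,dx_i\big)^2dx_{\sim i}\,dy}{\int\varphi^2\,dx\,dy-\varphi_0^2},$$ defined when $\mathrm{Var}(\varphi)=\int\varphi^2-\varphi_0^2>0$. *)

theory Defs
  imports "HOL-Probability.Probability"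
begin

definition unit_interval :: "real measure" where
  "unit_interval = restrict_space lborel {0..1}"

text \<open>The unit cube of dimension d: points are (extensional) functions on the
  index set {..<d} (coordinates x_1..x_d are indexed 0..d-1).\<close>
definition unit_cube :: "nat \<Rightarrow> (nat \<Rightarrow> real) measure" where
  "unit_cube d = PiM {..<d} (\<lambda>_. unit_interval)"

text \<open>Total Sobol index of the coordinate i (0-based) for a function phi on the
  d-dimensional unit cube (all remaining coordinates form x_{~i} together with y).\<close>
definition sobol_total :: "nat \<Rightarrow> ((nat \<Rightarrow> real) \<Rightarrow> real) \<Rightarrow> nat \<Rightarrow> real" where
  "sobol_total d \<phi> i =
     ((\<integral>z. (\<phi> z)\<^sup>2 \<partial>unit_cube d)
        - (\<integral>z. (\<integral>t. \<phi> (z(i := t)) \<partial>unit_interval)\<^sup>2 \<partial>unit_cube d))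
     / ((\<integral>z. (\<phi> z)\<^sup>2 \<partial>unit_cube d) - (\<integral>z. \<phi> z \<partial>unit_cube d)\<^sup>2)"

definition tensor_fun :: "nat \<Rightarrow> nat \<Rightarrow> ((nat \<Rightarrow> real) \<Rightarrow> real) \<Rightarrow> ((nat \<Rightarrow> real) \<Rightarrow> real)
    \<Rightarrow> (nat \<Rightarrow> real) \<Rightarrow> real" where
  "tensor_fun n m f h z = f (restrict z {..<n}) * h (restrict (\<lambda>j. z (n + j)) {..<m})"

end

theory Submission
  imports Defs
begin

text \<open>
  The cube of dimension n + m is the product of its first n and its last m coordinates, which are
  independent, and integrating out x_i commutes with multiplication by h(\<xi>). Hence every
  moment entering S^g factors: \<integral>g^2 = \<integral>f^2 \<integral>h^2, g_0 = f_0 h_0 and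
  \<integral>(\<integral>g dx_i)^2 = \<integral>(\<integral>f dx_i)^2 \<integral>h^2. Dividing numerator and denominator of S^g by \<integral>h^2
  gives \<lambda>_{f,h} S^f, and the bounds follow from h_0^2 \<le> \<integral>h^2 and (\<integral>f dx_i)^2 \<le> \<integral>f^2 dx_i.
\<close>

lemma indep_vars_PiM_components:
  assumes M: "\<And>i. i \<in> I \<Longrightarrow> prob_space (M i)"
  shows "prob_space.indep_vars (PiM I M) M (\<lambda>i x. x i) I"
proof -
  interpret prob_space "PiM I M" by (rule prob_space_PiM[OF M])
  show ?thesis
  proof (cases "I = {}")
    case True
    then show ?thesis unfolding indep_vars_def indep_sets_def by auto
  next
    case False
    have "distr (PiM I M) (PiM I M) (\<lambda>x. restrict x I) = distr (PiM I M) (PiM I M) (\<lambda>x. x)"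
      by (rule distr_cong) (auto simp: space_PiM)
    also have "\<dots> = PiM I (\<lambda>i. distr (PiM I M) (M i) (\<lambda>x. x i))"
      using M by (auto simp: distr_PiM_component intro!: PiM_cong)
    finally show ?thesis
      using False by (subst indep_vars_iff_distr_eq_PiM') auto
  qed
qed

lemma indep_var_PiM_restrict:
  assumes "\<And>i. i \<in> I \<Longrightarrow> prob_space (M i)" "A \<inter> B = {}" "A \<subseteq> I" "B \<subseteq> I"
  shows "prob_space.indep_var (PiM I M) (PiM A M) (\<lambda>x. restrict x A) (PiM B M) (\<lambda>x. restrict x B)"
  using prob_space.indep_var_restrict[OF prob_space_PiM indep_vars_PiM_components, OF assms(1,1) assms(2-)]
  by simp

lemma (in product_sigma_finite) distr_PiM_fun_upd:
  assumes I: "finite I" "i \<in> I" and Mi: "prob_space (M i)"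
  shows "distr (PiM I M \<Otimes>\<^sub>M M i) (PiM I M) (\<lambda>(x, t). x(i := t)) = PiM I M"
proof (rule PiM_eqI)
  interpret I: finite_product_sigma_finite M I by standard fact
  interpret Mi: prob_space "M i" by fact
  fix A assume A: "\<And>j. j \<in> I \<Longrightarrow> A j \<in> sets (M j)"
  have upd: "(\<lambda>(x, t). x(i := t)) \<in> measurable (PiM I M \<Otimes>\<^sub>M M i) (PiM I M)"
    using measurable_add_dim[of i I M] I by (simp add: insert_absorb)
  let ?A' = "A(i := space (M i))"
  have A': "\<And>j. j \<in> I \<Longrightarrow> ?A' j \<in> sets (M j)"
    using A by simp
  have preimage: "(\<lambda>(x, t). x(i := t)) -` PiE I A \<inter> space (PiM I M \<Otimes>\<^sub>M M i) = PiE I ?A' \<times> A i"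
    using A[THEN sets.sets_into_space] I
    by (auto simp: space_pair_measure space_PiM PiE_iff extensional_def split: if_splits) blast
  have "emeasure (distr (PiM I M \<Otimes>\<^sub>M M i) (PiM I M) (\<lambda>(x, t). x(i := t))) (PiE I A)
      = emeasure (PiM I M \<Otimes>\<^sub>M M i) (PiE I ?A' \<times> A i)"
    using A by (simp add: emeasure_distr[OF upd] sets_PiM_I_finite I preimage)
  also have "\<dots> = emeasure (PiM I M) (PiE I ?A') * emeasure (M i) (A i)"
    using A A' I by (intro emeasure_pair_measure_Times sets_PiM_I_finite) auto
  also have "\<dots> = (\<Prod>j\<in>I. emeasure (M j) (?A' j)) * emeasure (M i) (A i)"
    using A' by (simp add: I.measure_times)
  also have "\<dots> = (\<Prod>j\<in>I. emeasure (M j) (A j))"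
    using I by (simp add: prod.remove[OF I] Mi.emeasure_space_1 mult.commute cong: prod.cong_simp)
  finally show "emeasure (distr (PiM I M \<Otimes>\<^sub>M M i) (PiM I M) (\<lambda>(x, t). x(i := t))) (PiE I A)
      = (\<Prod>j\<in>I. emeasure (M j) (A j))" .
qed (use I in simp_all)

lemma (in prob_space) power2_integral_le:
  fixes u :: "'a \<Rightarrow> real"
  assumes "u \<in> borel_measurable M" "integrable M (\<lambda>x. (u x)\<^sup>2)"
  shows "(\<integral>x. u x \<partial>M)\<^sup>2 \<le> (\<integral>x. (u x)\<^sup>2 \<partial>M)"
  using variance_eq[OF square_integrable_imp_integrable[OF assms] assms(2)] variance_positive[of u]
  by simp

lemma (in prob_space) power2_integral_less:
  fixes u :: "'a \<Rightarrow> real"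
  assumes "u \<in> borel_measurable M" "integrable M (\<lambda>x. (u x)\<^sup>2)"
    and not_const: "\<not> (\<exists>c. AE x in M. u x = c)"
  shows "(\<integral>x. u x \<partial>M)\<^sup>2 < (\<integral>x. (u x)\<^sup>2 \<partial>M)"
proof -
  have u: "integrable M u"
    using square_integrable_imp_integrable[OF assms(1,2)] .
  have "variance u \<noteq> 0"
  proof
    assume "variance u = 0"
    moreover have "integrable M (\<lambda>x. (u x - expectation u)\<^sup>2)"
      using u assms(2) by (simp add: power2_diff)
    ultimately have "AE x in M. (u x - expectation u)\<^sup>2 = 0"
      by (subst integral_nonneg_eq_0_iff_AE[symmetric]) auto
    then have "AE x in M. u x = expectation u"
      by eventually_elim simp
    with not_const show False by blast
  qed
  then show ?thesis
    using variance_eq[OF u assms(2)] variance_positive[of u] by linarith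
qed

lemma integral_power2_pos:
  fixes u :: "'a \<Rightarrow> real"
  assumes "integrable M (\<lambda>x. (u x)\<^sup>2)" and not_zero: "\<not> (AE x in M. u x = 0)"
  shows "0 < (\<integral>x. (u x)\<^sup>2 \<partial>M)"
proof -
  have "(\<integral>x. (u x)\<^sup>2 \<partial>M) \<noteq> 0"
    using not_zero integral_nonneg_eq_0_iff_AE[OF assms(1)] by auto
  moreover have "0 \<le> (\<integral>x. (u x)\<^sup>2 \<partial>M)"
    by (intro integral_nonneg_AE) simp
  ultimately show ?thesis by linarith
qed

lemma prob_space_unit_interval: "prob_space unit_interval"
  by (rule prob_spaceI)
     (simp add: unit_interval_def space_restrict_space emeasure_restrict_space)

lemma prob_space_unit_cube: "prob_space (unit_cube d)"
  unfolding unit_cube_def by (intro prob_space_PiM prob_space_unit_interval)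

lemma product_sigma_finite_unit_interval: "product_sigma_finite (\<lambda>_. unit_interval)"
  by (simp add: product_sigma_finite_def prob_space_unit_interval prob_space_imp_sigma_finite)

lemma measurable_unit_cube_take:
  "(\<lambda>z. restrict z {..<n}) \<in> measurable (unit_cube (n + m)) (unit_cube n)"
  unfolding unit_cube_def by (rule measurable_restrict_subset) auto

lemma measurable_unit_cube_drop:
  "(\<lambda>z. restrict (\<lambda>j. z (n + j)) {..<m}) \<in> measurable (unit_cube (n + m)) (unit_cube m)"
  unfolding unit_cube_def by (intro measurable_restrict measurable_component_singleton) auto

lemma distr_unit_cube_take:
  "distr (unit_cube (n + m)) (unit_cube n) (\<lambda>z. restrict z {..<n}) = unit_cube n"
  using distr_PiM_reindex[of "{..<n + m}" "\<lambda>_. unit_interval" id "{..<n}"]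
  by (simp add: unit_cube_def prob_space_unit_interval)

lemma distr_unit_cube_drop:
  "distr (unit_cube (n + m)) (unit_cube m) (\<lambda>z. restrict (\<lambda>j. z (n + j)) {..<m}) = unit_cube m"
  using distr_PiM_reindex[of "{..<n + m}" "\<lambda>_. unit_interval" "(+) n" "{..<m}"]
  by (simp add: unit_cube_def prob_space_unit_interval)

lemma indep_var_unit_cube_take_drop:
  "prob_space.indep_var (unit_cube (n + m))
     (unit_cube n) (\<lambda>z. restrict z {..<n}) (unit_cube m) (\<lambda>z. restrict (\<lambda>j. z (n + j)) {..<m})"
proof -
  interpret prob_space "unit_cube (n + m)" by (rule prob_space_unit_cube)
  have blocks: "indep_var (unit_cube n) (\<lambda>z. restrict z {..<n})
      (PiM {n..<n + m} (\<lambda>_. unit_interval)) (\<lambda>z. restrict z {n..<n + m})"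
    unfolding unit_cube_def
    by (rule indep_var_PiM_restrict) (auto simp: prob_space_unit_interval)
  have shift: "(\<lambda>y. restrict (\<lambda>j. y (n + j)) {..<m})
      \<in> measurable (PiM {n..<n + m} (\<lambda>_. unit_interval)) (unit_cube m)"
    unfolding unit_cube_def by (intro measurable_restrict measurable_component_singleton) auto
  have drop: "(\<lambda>y. restrict (\<lambda>j. y (n + j)) {..<m}) \<circ> (\<lambda>z. restrict z {n..<n + m})
      = (\<lambda>z. restrict (\<lambda>j. z (n + j)) {..<m})"
    by (auto simp: fun_eq_iff)
  from indep_var_compose[OF blocks measurable_ident shift] show ?thesis
    unfolding drop id_comp .
qed

lemma integral_tensor_fun:
  assumes K: "integrable (unit_cube n) K" and L: "integrable (unit_cube m) L"
  shows "(\<integral>z. tensor_fun n m K L z \<partial>unit_cube (n + m))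
    = (\<integral>x. K x \<partial>unit_cube n) * (\<integral>\<xi>. L \<xi> \<partial>unit_cube m)"
proof -
  interpret prob_space "unit_cube (n + m)" by (rule prob_space_unit_cube)
  let ?take = "\<lambda>z. restrict z {..<n}" and ?drop = "\<lambda>z. restrict (\<lambda>j. z (n + j)) {..<m}"
  note take = measurable_unit_cube_take[of n m] and drop = measurable_unit_cube_drop[of n m]
  have "indep_var borel (K \<circ> ?take) borel (L \<circ> ?drop)"
    using K L by (intro indep_var_compose[OF indep_var_unit_cube_take_drop]) auto
  moreover have "integrable (unit_cube (n + m)) (\<lambda>z. K (?take z))"
    using K integrable_distr_eq[OF take, of K] by (simp add: distr_unit_cube_take)
  moreover have "integrable (unit_cube (n + m)) (\<lambda>z. L (?drop z))"
    using L integrable_distr_eq[OF drop, of L] by (simp add: distr_unit_cube_drop)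
  ultimately have "(\<integral>z. K (?take z) * L (?drop z) \<partial>unit_cube (n + m))
      = (\<integral>z. K (?take z) \<partial>unit_cube (n + m)) * (\<integral>z. L (?drop z) \<partial>unit_cube (n + m))"
    by (intro indep_var_lebesgue_integral) (simp_all add: comp_def)
  also have "\<dots> = (\<integral>x. K x \<partial>unit_cube n) * (\<integral>\<xi>. L \<xi> \<partial>unit_cube m)"
    using K L integral_distr[OF take, of K] integral_distr[OF drop, of L]
    by (simp add: distr_unit_cube_take distr_unit_cube_drop)
  finally show ?thesis
    by (simp add: tensor_fun_def)
qed

text \<open>The paper's \<integral>\<phi> dx_i, as a function on the whole cube that ignores its i-th argument.\<close>

definition coord_average :: "nat \<Rightarrow> ((nat \<Rightarrow> real) \<Rightarrow> real) \<Rightarrow> (nat \<Rightarrow> real) \<Rightarrow> real" where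
  "coord_average i f x = (\<integral>t. f (x(i := t)) \<partial>unit_interval)"

lemma sobol_total_coord_average:
  "sobol_total d \<phi> i =
     ((\<integral>z. (\<phi> z)\<^sup>2 \<partial>unit_cube d) - (\<integral>z. (coord_average i \<phi> z)\<^sup>2 \<partial>unit_cube d))
     / ((\<integral>z. (\<phi> z)\<^sup>2 \<partial>unit_cube d) - (\<integral>z. \<phi> z \<partial>unit_cube d)\<^sup>2)"
  by (simp add: sobol_total_def coord_average_def)

lemma coord_average_tensor_fun:
  assumes "i < n"
  shows "coord_average i (tensor_fun n m f h) = tensor_fun n m (coord_average i f) h"
proof
  fix z :: "nat \<Rightarrow> real"
  have "restrict (z(i := t)) {..<n} = (restrict z {..<n})(i := t)" for t
    using assms by (auto simp: fun_eq_iff)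
  moreover have "(\<lambda>j. (z(i := t)) (n + j)) = (\<lambda>j. z (n + j))" for t
    using assms by (auto simp: fun_eq_iff)
  ultimately show "coord_average i (tensor_fun n m f h) z = tensor_fun n m (coord_average i f) h z"
    by (simp add: coord_average_def tensor_fun_def)
qed

lemma measurable_unit_cube_fun_upd:
  assumes "i < n"
  shows "(\<lambda>(x, t). x(i := t)) \<in> measurable (unit_cube n \<Otimes>\<^sub>M unit_interval) (unit_cube n)"
  using measurable_add_dim[of i "{..<n}" "\<lambda>_. unit_interval"] assms
  by (simp add: unit_cube_def insert_absorb)

lemma distr_unit_cube_fun_upd:
  assumes "i < n"
  shows "distr (unit_cube n \<Otimes>\<^sub>M unit_interval) (unit_cube n) (\<lambda>(x, t). x(i := t)) = unit_cube n"
  unfolding unit_cube_def using assms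
  by (intro product_sigma_finite.distr_PiM_fun_upd product_sigma_finite_unit_interval
      prob_space_unit_interval) auto

lemma borel_measurable_coord_average:
  assumes "i < n" and "f \<in> borel_measurable (unit_cube n)"
  shows "coord_average i f \<in> borel_measurable (unit_cube n)"
proof -
  interpret prob_space unit_interval by (rule prob_space_unit_interval)
  have "(\<lambda>(x, t). f (x(i := t))) \<in> borel_measurable (unit_cube n \<Otimes>\<^sub>M unit_interval)"
    using measurable_compose[OF measurable_unit_cube_fun_upd assms(2)] assms(1)
    by (simp add: case_prod_beta')
  then show ?thesis
    unfolding coord_average_def[abs_def] by (rule borel_measurable_lebesgue_integral)
qed

lemma
  assumes i: "i < n" and f: "f \<in> borel_measurable (unit_cube n)"
    and f2: "integrable (unit_cube n) (\<lambda>x. (f x)\<^sup>2)"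
  shows integrable_coord_average_power2: "integrable (unit_cube n) (\<lambda>x. (coord_average i f x)\<^sup>2)"
    and integral_coord_average_power2_le:
      "(\<integral>x. (coord_average i f x)\<^sup>2 \<partial>unit_cube n) \<le> (\<integral>x. (f x)\<^sup>2 \<partial>unit_cube n)"
proof -
  interpret UI: prob_space unit_interval by (rule prob_space_unit_interval)
  interpret P: pair_prob_space "unit_cube n" unit_interval
    by (simp add: pair_prob_space_def pair_sigma_finite_def prob_space_unit_cube
        prob_space_unit_interval prob_space_imp_sigma_finite)
  note upd = measurable_unit_cube_fun_upd[OF i]
  let ?F = "\<lambda>x t. (f (x(i := t)))\<^sup>2"
  have f2_meas: "(\<lambda>x. (f x)\<^sup>2) \<in> borel_measurable (unit_cube n)"
    using f by measurable
  have F: "integrable (unit_cube n \<Otimes>\<^sub>M unit_interval) (case_prod ?F)"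
    using f2 integrable_distr_eq[OF upd f2_meas, unfolded distr_unit_cube_fun_upd[OF i]]
    by (simp add: case_prod_beta')
  have int_F: "(\<integral>x. (\<integral>t. ?F x t \<partial>unit_interval) \<partial>unit_cube n) = (\<integral>x. (f x)\<^sup>2 \<partial>unit_cube n)"
    using P.integral_fst'[OF F] integral_distr[OF upd f2_meas, unfolded distr_unit_cube_fun_upd[OF i]]
    by (simp add: case_prod_beta')
  have F_fst: "integrable (unit_cube n) (\<lambda>x. \<integral>t. ?F x t \<partial>unit_interval)"
    using P.integrable_fst'[OF F] by simp
  have "AE x in unit_cube n. (coord_average i f x)\<^sup>2 \<le> (\<integral>t. ?F x t \<partial>unit_interval)"
    using P.AE_integrable_fst'[OF F] AE_space
  proof eventually_elim
    case (elim x)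
    have "(\<lambda>t. f (x(i := t))) \<in> borel_measurable unit_interval"
      using measurable_compose[OF measurable_Pair1'[OF elim(2)] measurable_compose[OF upd f]]
      by simp
    then show ?case
      unfolding coord_average_def using elim(1) by (intro UI.power2_integral_le) simp_all
  qed
  note bound = this
  show int: "integrable (unit_cube n) (\<lambda>x. (coord_average i f x)\<^sup>2)"
    using bound borel_measurable_coord_average[OF i f]
    by (intro Bochner_Integration.integrable_bound[OF F_fst])
       (auto elim!: eventually_mono)
  show "(\<integral>x. (coord_average i f x)\<^sup>2 \<partial>unit_cube n) \<le> (\<integral>x. (f x)\<^sup>2 \<partial>unit_cube n)"
    using integral_mono_AE[OF int F_fst bound] int_F by simp
qed

lemma sobol_total_tensor_fun:
  assumes i: "i < n"
    and f: "f \<in> borel_measurable (unit_cube n)" "integrable (unit_cube n) (\<lambda>x. (f x)\<^sup>2)"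
    and h: "h \<in> borel_measurable (unit_cube m)" "integrable (unit_cube m) (\<lambda>\<xi>. (h \<xi>)\<^sup>2)"
  shows "sobol_total (n + m) (tensor_fun n m f h) i =
    ((\<integral>x. (f x)\<^sup>2 \<partial>unit_cube n) * (\<integral>\<xi>. (h \<xi>)\<^sup>2 \<partial>unit_cube m)
       - (\<integral>x. (coord_average i f x)\<^sup>2 \<partial>unit_cube n) * (\<integral>\<xi>. (h \<xi>)\<^sup>2 \<partial>unit_cube m))
    / ((\<integral>x. (f x)\<^sup>2 \<partial>unit_cube n) * (\<integral>\<xi>. (h \<xi>)\<^sup>2 \<partial>unit_cube m)
       - ((\<integral>x. f x \<partial>unit_cube n) * (\<integral>\<xi>. h \<xi> \<partial>unit_cube m))\<^sup>2)"
proof -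
  have "(\<lambda>z. (tensor_fun n m f h z)\<^sup>2) = tensor_fun n m (\<lambda>x. (f x)\<^sup>2) (\<lambda>\<xi>. (h \<xi>)\<^sup>2)"
    and "(\<lambda>z. (coord_average i (tensor_fun n m f h) z)\<^sup>2)
      = tensor_fun n m (\<lambda>x. (coord_average i f x)\<^sup>2) (\<lambda>\<xi>. (h \<xi>)\<^sup>2)"
    by (simp_all add: coord_average_tensor_fun[OF i] tensor_fun_def fun_eq_iff power_mult_distrib)
  moreover have "integrable (unit_cube n) f" "integrable (unit_cube m) h"
    using prob_space_unit_cube[THEN prob_space.axioms(1)] f h
    by (blast intro: finite_measure.square_integrable_imp_integrable)+
  ultimately show ?thesis
    using f h integrable_coord_average_power2[OF i f]
    by (simp add: sobol_total_coord_average integral_tensor_fun)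
qed

text \<open>
  With A = \<integral>f^2, F0 = f_0, B = \<integral>h^2, H0 = h_0 and Q = \<integral>(\<integral>f dx_i)^2, S is S^f, S' is S^g,
  and the factor in the first identity is \<lambda>_{f,h}.
\<close>

lemma sobol_ratio_scaling:
  fixes A F0 B H0 Q :: real
  assumes "F0\<^sup>2 < A" "0 < B" "H0\<^sup>2 \<le> B" "Q \<le> A"
  defines "S \<equiv> (A - Q) / (A - F0\<^sup>2)" and "S' \<equiv> (A * B - Q * B) / (A * B - (F0 * H0)\<^sup>2)"
  shows "S' = (A - F0\<^sup>2) / (A - F0\<^sup>2 * H0\<^sup>2 / B) * S"
    and "S' \<le> S"
    and "(1 - F0\<^sup>2 / A) * S \<le> S'"
proof -
  define D where "D = A - F0\<^sup>2 * H0\<^sup>2 / B"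
  have "F0\<^sup>2 * H0\<^sup>2 / B \<le> F0\<^sup>2"
    using assms(2,3) by (simp add: divide_le_eq mult_left_mono)
  then have D: "A - F0\<^sup>2 \<le> D" "D \<le> A" "0 < D"
    using assms(1,2) by (auto simp: D_def)
  have "A * B - (F0 * H0)\<^sup>2 = D * B"
    using assms(2) by (simp add: D_def field_simps)
  then have S': "S' = (A - Q) / D"
    using assms(2) by (simp add: S'_def left_diff_distrib[symmetric])
  show "S' = (A - F0\<^sup>2) / (A - F0\<^sup>2 * H0\<^sup>2 / B) * S"
    using assms(1) by (simp add: S' S_def D_def)
  show "S' \<le> S"
    using assms(1,4) D by (simp add: S' S_def divide_left_mono)
  have "(1 - F0\<^sup>2 / A) * S = (A - Q) / A"
    using assms(1) D by (simp add: S_def field_simps)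
  also have "\<dots> \<le> (A - Q) / D"
    using assms(4) D by (simp add: divide_left_mono)
  finally show "(1 - F0\<^sup>2 / A) * S \<le> S'"
    by (simp add: S')
qed

theorem theorem1:
  fixes n m :: nat and f h :: "(nat \<Rightarrow> real) \<Rightarrow> real" and i :: nat
  assumes "n \<ge> 1" and "m \<ge> 1"
    and "f \<in> borel_measurable (unit_cube n)"
    and "integrable (unit_cube n) (\<lambda>x. (f x)\<^sup>2)"
    and "h \<in> borel_measurable (unit_cube m)"
    and "integrable (unit_cube m) (\<lambda>\<xi>. (h \<xi>)\<^sup>2)"
    and "\<not> (\<exists>c. AE x in unit_cube n. f x = c)"
    and "\<not> (AE \<xi> in unit_cube m. h \<xi> = 0)"
    and "i < n"
  shows "sobol_total (n + m) (tensor_fun n m f h) i =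
           ((\<integral>x. (f x)\<^sup>2 \<partial>unit_cube n) - (\<integral>x. f x \<partial>unit_cube n)\<^sup>2)
           / ((\<integral>x. (f x)\<^sup>2 \<partial>unit_cube n)
              - (\<integral>x. f x \<partial>unit_cube n)\<^sup>2 * (\<integral>\<xi>. h \<xi> \<partial>unit_cube m)\<^sup>2
                / (\<integral>\<xi>. (h \<xi>)\<^sup>2 \<partial>unit_cube m))
           * sobol_total n f i
      \<and> sobol_total (n + m) (tensor_fun n m f h) i \<le> sobol_total n f i
      \<and> sobol_total (n + m) (tensor_fun n m f h) i \<ge>
           (1 - (\<integral>x. f x \<partial>unit_cube n)\<^sup>2 / (\<integral>x. (f x)\<^sup>2 \<partial>unit_cube n)) * sobol_total n f i"
proof -
  note f = assms(3,4) and h = assms(5,6) and i = assms(9)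
  have "(\<integral>x. f x \<partial>unit_cube n)\<^sup>2 < (\<integral>x. (f x)\<^sup>2 \<partial>unit_cube n)"
    using prob_space.power2_integral_less[OF prob_space_unit_cube f assms(7)] .
  moreover have "0 < (\<integral>\<xi>. (h \<xi>)\<^sup>2 \<partial>unit_cube m)"
    using integral_power2_pos[OF h(2) assms(8)] .
  moreover have "(\<integral>\<xi>. h \<xi> \<partial>unit_cube m)\<^sup>2 \<le> (\<integral>\<xi>. (h \<xi>)\<^sup>2 \<partial>unit_cube m)"
    using prob_space.power2_integral_le[OF prob_space_unit_cube h] .
  moreover have "(\<integral>x. (coord_average i f x)\<^sup>2 \<partial>unit_cube n) \<le> (\<integral>x. (f x)\<^sup>2 \<partial>unit_cube n)"
    using integral_coord_average_power2_le[OF i f] .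
  ultimately show ?thesis
    unfolding sobol_total_tensor_fun[OF i f h] sobol_total_coord_average[of n f i]
    using sobol_ratio_scaling by blast
qed

end
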